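(* Let $N>1$ and $d>0$ be real numbers with $$d^{2}>\frac{16N^{2}}{27}\left(\left(8N^{2}-6\right)\sqrt{1-\frac{3N^{-2}}{4}}+8N^{2}-9\right).$$ Let $F(z)=(1-Nz)^{2}\left(1-\frac{d^{2}}{z^{2}-1}\right)$, $\varphi(z)=\frac{1}{d^{2}}+\frac{1-N^{-1}z}{(z^{2}-1)^{2}}$ and $I_{2}=(1,\sqrt{1+d^{2}})$. Then the equation $\varphi(z)=0$ has exactly two roots $z_{02}<z_{03}$ in $I_{2}$. Moreover, for real $A>0$, the equation $F(z)+A=0$ (i.e. the quartic equation $(1-Nz)^{2}(z^{2}-1-d^{2})+A(z^{2}-1)=0$ in the complex variable $z$) has four real roots when $-F(z_{02})<A\leq -F(z_{03})$, and has two real and two (non-real) complex roots when $A<-F(z_{02})$ and when $A>-F(z_{03})$.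
   Context: This is the (dimensionless) dispersion relation for Kelvin–Helmholtz perturbations of two thin co-flowing layers (a pure incompressible fluid and a bubbly fluid): $z=ad/(u_{20}-c)$ with $c$ the phase velocity, $d=1/(bk)$, $N=M/d$ with $M=(u_{20}-u_{10})/a$, and $A=h_0\rho_{20}/((H_0-h_0)\rho_{10})>0$. The equation $F(z)+A=0$ is regarded as the fourth-degree polynomial equation obtained by multiplying by $z^{2}-1$; roots are counted with multiplicity. *)

theory Defs
  imports "HOL-Computational_Algebra.Polynomial" Complex_Main
begin

definition KH_F :: "real \<Rightarrow> real \<Rightarrow> real \<Rightarrow> real" where
  "KH_F N d z = (1 - N * z)^2 * (1 - d^2 / (z^2 - 1))"

definition KH_phi :: "real \<Rightarrow> real \<Rightarrow> real \<Rightarrow> real" where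
  "KH_phi N d z = 1 / d^2 + (1 - z / N) / (z^2 - 1)^2"

text \<open>The quartic (1 - N z)^2 (z^2 - 1 - d^2) + A (z^2 - 1), i.e. (F(z)+A)(z^2-1).\<close>
definition KH_quartic :: "real \<Rightarrow> real \<Rightarrow> real \<Rightarrow> real poly" where
  "KH_quartic N d A = [:1, -N:]^2 * [:-(1 + d^2), 0, 1:] + smult A [:-1, 0, 1:]"

definition real_root_count :: "real poly \<Rightarrow> nat" where
  "real_root_count p = (\<Sum>x\<in>{x. poly p x = 0}. order x p)"

definition nonreal_root_count :: "real poly \<Rightarrow> nat" where
  "nonreal_root_count p =
     (\<Sum>z\<in>{z. poly (map_poly complex_of_real p) z = 0 \<and> Im z \<noteq> 0}.
        order z (map_poly complex_of_real p))"

end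

theory Submission
  imports Defs "HOL-Computational_Algebra.Fundamental_Theorem_Algebra"
begin

text \<open>Write \<open>\<phi> = g / (d\<^sup>2 (z\<^sup>2 - 1)\<^sup>2)\<close> with \<open>g(z) = (z\<^sup>2 - 1)\<^sup>2 + d\<^sup>2 (1 - z/N)\<close>; then
  \<open>F'(z) = -2N (1 - Nz) g(z) / (z\<^sup>2 - 1)\<^sup>2\<close>. On \<open>(1, \<infinity>)\<close> the function \<open>g\<close> is strictly convex,
  positive at \<open>1\<close> and from \<open>\<surd>(1 + d\<^sup>2)\<close> on, and the hypothesis on \<open>d\<close> makes it negative at
  \<open>(2N + \<surd>(4N\<^sup>2 - 3))/3\<close>. Hence \<open>g\<close> has exactly two zeros \<open>z\<^sub>0\<^sub>2 < z\<^sub>0\<^sub>3\<close> there, and \<open>F\<close>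
  increases on \<open>(1, z\<^sub>0\<^sub>2]\<close>, decreases on \<open>[z\<^sub>0\<^sub>2, z\<^sub>0\<^sub>3]\<close>, increases on \<open>[z\<^sub>0\<^sub>3, \<infinity>)\<close> and decreases
  on \<open>(-\<infinity>, -1)\<close>.

  Away from \<open>z = \<plusminus>1\<close> the quartic equals \<open>(z\<^sup>2 - 1)(F(z) + A)\<close>, and it is negative on
  \<open>[-1, 1]\<close>. So its real roots are the solutions of \<open>F(z) = -A\<close> with \<open>|z| > 1\<close>: exactly one
  below \<open>-1\<close>, and above \<open>1\<close> either three (the last two merging into the double root \<open>z\<^sub>0\<^sub>3\<close>
  when \<open>A = -F(z\<^sub>0\<^sub>3)\<close>) or a single simple one, according to the position of \<open>-A\<close> relative to
  the local extrema \<open>F(z\<^sub>0\<^sub>2) > F(z\<^sub>0\<^sub>3)\<close>. The non-real roots make up the rest of the degree.\<close>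

section \<open>Counting roots of real polynomials\<close>

lemma map_poly_of_real_mult:
  fixes p q :: "real poly"
  shows "map_poly (of_real :: real \<Rightarrow> 'a::real_field) (p * q) = map_poly of_real p * map_poly of_real q"
  by (rule poly_eqI) (simp add: coeff_map_poly coeff_mult)

lemma map_poly_of_real_power:
  fixes p :: "real poly"
  shows "map_poly (of_real :: real \<Rightarrow> 'a::real_field) (p ^ n) = map_poly of_real p ^ n"
  by (induction n) (simp_all add: map_poly_of_real_mult)

lemma poly_map_poly_of_real:
  "poly (map_poly (of_real :: real \<Rightarrow> 'a::real_field) p) (of_real x) = of_real (poly p x)"
  by (induction p) (auto simp: map_poly_pCons)

lemma order_map_poly_of_real:
  fixes p :: "real poly"
  assumes "p \<noteq> 0"
  shows "order (of_real x :: 'a::real_field) (map_poly of_real p) = order x p"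
proof -
  obtain q where p: "p = [:-x, 1:] ^ order x p * q" and q: "\<not> [:-x, 1:] dvd q"
    using order_decomp[OF assms] by blast
  have "q \<noteq> 0" using q by auto
  have "poly q x \<noteq> 0" using q by (simp add: poly_eq_0_iff_dvd)
  hence q_root: "order (of_real x :: 'a) (map_poly of_real q) = 0"
    by (simp add: order_0I poly_map_poly_of_real)
  have "map_poly (of_real :: real \<Rightarrow> 'a) p = [:-of_real x, 1:] ^ order x p * map_poly of_real q"
    by (subst p) (simp add: map_poly_of_real_mult map_poly_of_real_power map_poly_pCons)
  moreover have "map_poly (of_real :: real \<Rightarrow> 'a) q \<noteq> 0"
    using \<open>q \<noteq> 0\<close> by (simp add: map_poly_eq_0_iff)
  ultimately show ?thesis
    by (simp add: order_mult order_power_n_n q_root)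
qed

lemma real_root_count_eq_size_proots:
  "p \<noteq> 0 \<Longrightarrow> real_root_count p = size (proots p)"
  unfolding real_root_count_def by (simp add: size_multiset_overloaded_eq)

lemma real_root_count_le_degree: "p \<noteq> 0 \<Longrightarrow> real_root_count p \<le> degree p"
  using size_proots_le by (simp add: real_root_count_eq_size_proots)

lemma sum_order_le_real_root_count:
  assumes "p \<noteq> 0" "S \<subseteq> {x. poly p x = 0}"
  shows "(\<Sum>x\<in>S. order x p) \<le> real_root_count p"
  unfolding real_root_count_def
  using assms poly_roots_finite by (intro sum_mono2) auto

lemma card_le_real_root_count:
  assumes "p \<noteq> 0" "S \<subseteq> {x. poly p x = 0}"
  shows "card S \<le> real_root_count p"
proof -
  have "card S = (\<Sum>x\<in>S. 1)" by simp
  also have "\<dots> \<le> (\<Sum>x\<in>S. order x p)"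
    using assms order_root by (intro sum_mono) (auto simp: Suc_le_eq)
  also have "\<dots> \<le> real_root_count p" using sum_order_le_real_root_count[OF assms] .
  finally show ?thesis .
qed

lemma real_root_count_add_nonreal_root_count:
  fixes p :: "real poly"
  assumes "p \<noteq> 0"
  shows "real_root_count p + nonreal_root_count p = degree p"
proof -
  define P where "P = map_poly complex_of_real p"
  have "P \<noteq> 0" using assms by (simp add: P_def map_poly_eq_0_iff)
  have roots: "{z. poly P z = 0} = of_real ` {x. poly p x = 0} \<union> {z. poly P z = 0 \<and> Im z \<noteq> 0}"
  proof (intro set_eqI iffI)
    fix z assume z: "z \<in> {z. poly P z = 0}"
    show "z \<in> of_real ` {x. poly p x = 0} \<union> {z. poly P z = 0 \<and> Im z \<noteq> 0}"
    proof (cases "Im z = 0")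
      case True
      hence z_real: "z = of_real (Re z)" by (simp add: complex_eq_iff)
      hence "poly p (Re z) = 0"
        using z poly_map_poly_of_real[of p "Re z", where 'a=complex] z_real
        by (simp add: P_def)
      thus ?thesis using z_real by blast
    qed (use z in auto)
  qed (auto simp: P_def poly_map_poly_of_real)
  have "degree p = size (proots P)"
    using size_proots_complex[of P] by (simp add: P_def degree_map_poly)
  also have "\<dots> = (\<Sum>z\<in>{z. poly P z = 0}. order z P)"
    using \<open>P \<noteq> 0\<close> by (simp add: size_multiset_overloaded_eq)
  also have "\<dots> = (\<Sum>z\<in>of_real ` {x. poly p x = 0}. order z P) + nonreal_root_count p"
    unfolding roots nonreal_root_count_def P_def[symmetric]
    using poly_roots_finite[OF \<open>P \<noteq> 0\<close>] poly_roots_finite[OF assms]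
    by (intro sum.union_disjoint) auto
  also have "(\<Sum>z\<in>of_real ` {x. poly p x = 0}. order z P) = real_root_count p"
    unfolding real_root_count_def P_def
    by (subst sum.reindex) (auto simp: inj_on_def order_map_poly_of_real assms)
  finally show ?thesis by simp
qed

lemma order_eq_1_if_simple_root:
  fixes p :: "'a::field_char_0 poly"
  assumes "p \<noteq> 0" "poly p x = 0" "poly (pderiv p) x \<noteq> 0"
  shows "order x p = 1"
  using order_pderiv[OF assms(1,2)] assms(3) order_root by fastforce

lemma order_ge_2_if_multiple_root:
  fixes p :: "'a::field_char_0 poly"
  assumes "p \<noteq> 0" "poly p x = 0" "poly (pderiv p) x = 0"
  shows "order x p \<ge> 2"
proof -
  have "degree p \<noteq> 0" using order_degree[OF assms(1), of x] order_root[of p x] assms(1,2) by linarith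
  hence "pderiv p \<noteq> 0" by (simp add: pderiv_eq_0_iff)
  hence "order x (pderiv p) \<noteq> 0" using assms(3) order_root by blast
  thus ?thesis using order_pderiv[OF assms(1,2)] by simp
qed

lemma real_root_count_eq_card_if_simple_roots:
  assumes "p \<noteq> 0" "\<And>x. poly p x = 0 \<Longrightarrow> poly (pderiv p) x \<noteq> 0"
  shows "real_root_count p = card {x. poly p x = 0}"
  unfolding real_root_count_def using assms by (simp add: order_eq_1_if_simple_root)

lemma sign_change_imp_zero:
  fixes f :: "real \<Rightarrow> real"
  assumes "continuous_on {a..b} f" "a < b" "f a * f b < 0"
  shows "\<exists>x. a < x \<and> x < b \<and> f x = 0"
proof -
  have "f a \<noteq> 0" "f b \<noteq> 0" using assms(3) by auto
  moreover obtain x where "a \<le> x" "x \<le> b" "f x = 0"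
    using assms IVT'[of f a 0 b] IVT2'[of f b 0 a] by (cases "f a < 0") (auto simp: mult_less_0_iff)
  ultimately show ?thesis by (metis order.order_iff_strict)
qed

lemma pos_iff_pos_if_no_zero:
  fixes f :: "real \<Rightarrow> real"
  assumes "continuous_on {a..b} f" "a \<le> b" "\<forall>t\<in>{a..b}. f t \<noteq> 0"
  shows "f a > 0 \<longleftrightarrow> f b > 0"
proof (rule ccontr)
  assume "\<not> (f a > 0 \<longleftrightarrow> f b > 0)"
  moreover have "f a \<noteq> 0" "f b \<noteq> 0" using assms(2,3) by auto
  ultimately have "f a * f b < 0" by (auto simp: mult_less_0_iff)
  moreover have "a < b" using \<open>\<not> (f a > 0 \<longleftrightarrow> f b > 0)\<close> assms(2) by (cases "a = b") auto
  ultimately show False using sign_change_imp_zero[OF assms(1)] assms(3) by fastforce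
qed

section \<open>The numerator of \<open>\<phi>\<close>\<close>

definition KH_phi_num :: "real \<Rightarrow> real \<Rightarrow> real \<Rightarrow> real" where
  "KH_phi_num N d x = (x^2 - 1)^2 + d^2 * (1 - x / N)"

lemma KH_phi_eq_num:
  "z^2 \<noteq> 1 \<Longrightarrow> d \<noteq> 0 \<Longrightarrow> KH_phi N d z = KH_phi_num N d z / (d^2 * (z^2 - 1)^2)"
  unfolding KH_phi_def KH_phi_num_def by (simp add: field_simps)

lemma KH_phi_num_pos_if_le_1:
  assumes "N > 1" "d > 0" "x \<le> 1"
  shows "KH_phi_num N d x > 0"
proof -
  have "x / N < 1" using assms by (simp add: divide_less_eq)
  hence "d^2 * (1 - x / N) > 0" using assms(2) by simp
  thus ?thesis unfolding KH_phi_num_def by (simp add: add_nonneg_pos)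
qed

lemma KH_phi_num_pos_if_ge_sqrt:
  assumes "N > 1" "d > 0" "x \<ge> sqrt (1 + d^2)"
  shows "KH_phi_num N d x > 0"
proof -
  have x2: "x^2 - 1 \<ge> d^2"
    using power_mono[OF assms(3), of 2] by simp
  have "1 < sqrt (1 + d^2)" using assms(2) by simp
  hence "x > 1" using assms(3) by linarith
  have "x^2 - 1 \<ge> 0" using x2 zero_le_power2[of d] by linarith
  hence "(x^2 - 1)^2 \<ge> d^2 * (x^2 - 1)"
    using mult_right_mono[OF x2] by (simp add: power2_eq_square[of "x^2 - 1"])
  moreover have "x / N < x" "x < x^2"
    using assms(1) \<open>x > 1\<close> by (simp_all add: divide_less_eq power2_eq_square)
  ultimately have "KH_phi_num N d x \<ge> d^2 * (x^2 - x / N)"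
    unfolding KH_phi_num_def by (simp add: algebra_simps)
  moreover have "d^2 * (x^2 - x / N) > 0"
    using assms(2) \<open>x / N < x\<close> \<open>x < x^2\<close> by simp
  ultimately show ?thesis by linarith
qed

text \<open>The second divided difference of the numerator is \<open>a\<^sup>2 + b\<^sup>2 + c\<^sup>2 + ab + bc + ca - 2 > 0\<close>,
  so it is strictly convex on \<open>(1, \<infinity>)\<close> and has at most two zeros there.\<close>
lemma KH_phi_num_no_three_zeros:
  assumes "1 < a" "a < b" "b < c"
    and "KH_phi_num N d a = 0" "KH_phi_num N d b = 0" "KH_phi_num N d c = 0"
  shows False
proof -
  define P where "P u v = (u + v) * (u^2 + v^2) - 2 * (u + v) - d^2 / N" for u v
  have diff: "KH_phi_num N d u - KH_phi_num N d v = (u - v) * P u v" for u v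
    unfolding KH_phi_num_def P_def
    by (simp add: algebra_simps power2_eq_square diff_divide_distrib[symmetric]
        add_divide_distrib[symmetric])
  have "P a b = 0" "P b c = 0" using diff[of a b] diff[of b c] assms by simp_all
  moreover have "P a b - P b c = (a - c) * (a^2 + b^2 + c^2 + a*b + b*c + c*a - 2)"
    unfolding P_def by (simp add: algebra_simps power2_eq_square power3_eq_cube)
  moreover have "a^2 + b^2 + c^2 + a*b + b*c + c*a - 2 > 0"
  proof -
    have "a^2 > 1" "b^2 > 1" "a*b > 1" using assms by (auto simp: power2_eq_square less_1_mult)
    moreover have "c^2 \<ge> 0" "b*c > 0" "c*a > 0" using assms by auto
    ultimately show ?thesis by linarith
  qed
  ultimately show False using assms by simp
qed

text \<open>The point \<open>(2N + \<surd>(4N\<^sup>2 - 3))/3\<close> minimises \<open>(z\<^sup>2 - 1)\<^sup>2 / (z - N)\<close> over \<open>z > N\<close>, and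
  the hypothesis on \<open>d\<close> says precisely that \<open>d\<^sup>2/N\<close> exceeds this minimum.\<close>
lemma KH_phi_num_neg_at_critical_point:
  fixes N d :: real
  assumes N: "N > 1"
    and hyp: "d^2 > 16 * N^2 / 27 * ((8 * N^2 - 6) * sqrt (1 - 3 / (4 * N^2)) + 8 * N^2 - 9)"
  defines "z \<equiv> (2 * N + sqrt (4 * N^2 - 3)) / 3"
  shows "z > N" "KH_phi_num N d z < 0"
proof -
  define r where "r = sqrt (4 * N^2 - 3)"
  have "N * N > 1" using N less_1_mult by fastforce
  hence r2: "r^2 = 4 * N^2 - 3" and r0: "r \<ge> 0"
    unfolding r_def by (simp_all add: power2_eq_square)
  have "N^2 < r^2" using r2 \<open>N * N > 1\<close> by (simp add: power2_eq_square)
  hence "r > N" using r0 N by (smt (verit) power_mono)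
  show zN: "z > N" unfolding z_def r_def[symmetric] using \<open>r > N\<close> by simp
  have "sqrt (1 - 3 / (4 * N^2)) = sqrt ((4 * N^2 - 3) / (2 * N)^2)"
    using N by (simp add: field_simps power2_eq_square)
  also have "\<dots> = r / (2 * N)"
    unfolding r_def real_sqrt_divide using N by (simp only: real_sqrt_abs)
  finally have sqrt_eq: "sqrt (1 - 3 / (4 * N^2)) = r / (2 * N)" .
  have "16 * N^2 / 27 * ((8 * N^2 - 6) * (r / (2 * N)) + 8 * N^2 - 9)
      = 16 * N / 27 * ((4 * N^2 - 3) * r + 8 * N^3 - 9 * N)"
    using N by (simp add: field_simps power2_eq_square power3_eq_cube)
  hence bound: "d^2 > 16 * N / 27 * ((4 * N^2 - 3) * r + 8 * N^3 - 9 * N)"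
    using hyp unfolding sqrt_eq by simp
  define w where "w = 2 * N^2 + N * r - 3"
  define X where "X = (4 * N^2 - 3) * r + 8 * N^3 - 9 * N"
  have zw: "z^2 - 1 = 4 * w / 9"
    unfolding z_def w_def r_def[symmetric] using r2 by (simp add: field_simps power2_eq_square)
  have "w^2 = X * (r - N) + (3 - 3 * N^2) * (r^2 - (4 * N^2 - 3))"
    unfolding w_def X_def by (simp add: field_simps power2_eq_square power3_eq_cube)
  hence w2: "w^2 = X * (r - N)" using r2 by simp
  have "N * (z^2 - 1)^2 = 16 * N / 81 * w^2" unfolding zw by (simp add: power2_eq_square)
  also have "\<dots> = 16 * N / 81 * (X * (r - N))" unfolding w2 ..
  also have "\<dots> = 16 * N / 27 * X * (z - N)" unfolding z_def r_def by simp
  also have "\<dots> < d^2 * (z - N)"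
    using bound zN unfolding X_def by (intro mult_strict_right_mono) auto
  finally show "KH_phi_num N d z < 0"
    unfolding KH_phi_num_def using N by (simp add: field_simps)
qed

lemma continuous_on_KH_phi_num: "N \<noteq> 0 \<Longrightarrow> continuous_on S (KH_phi_num N d)"
  unfolding KH_phi_num_def by (intro continuous_intros) auto

text \<open>\<open>z02 < z03\<close> are the zeros of \<open>\<phi>\<close> in \<open>(1, \<infinity>)\<close>, i.e. the critical points of \<open>F\<close> there.\<close>
locale KH_sign_pattern =
  fixes N d z02 z03 :: real
  assumes N_gt_1: "N > 1" and d_pos: "d > 0"
    and one_less_z02: "1 < z02" and z02_less_z03: "z02 < z03"
    and zero_z02: "KH_phi_num N d z02 = 0" and zero_z03: "KH_phi_num N d z03 = 0"
    and pos_below_z02: "\<And>x. 1 < x \<Longrightarrow> x < z02 \<Longrightarrow> KH_phi_num N d x > 0"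
    and neg_between: "\<And>x. z02 < x \<Longrightarrow> x < z03 \<Longrightarrow> KH_phi_num N d x < 0"
    and pos_above_z03: "\<And>x. z03 < x \<Longrightarrow> KH_phi_num N d x > 0"

lemma KH_phi_num_zeros:
  fixes N d :: real
  assumes N: "N > 1" and d: "d > 0"
    and hyp: "d^2 > 16 * N^2 / 27 * ((8 * N^2 - 6) * sqrt (1 - 3 / (4 * N^2)) + 8 * N^2 - 9)"
  obtains z02 z03 where "KH_sign_pattern N d z02 z03"
proof -
  let ?g = "KH_phi_num N d"
  define z where "z = (2 * N + sqrt (4 * N^2 - 3)) / 3"
  define s where "s = sqrt (1 + d^2)"
  have cont: "continuous_on S ?g" for S using continuous_on_KH_phi_num N by simp
  have "z > 1" "?g z < 0"
    using KH_phi_num_neg_at_critical_point[OF N hyp] N unfolding z_def by auto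
  have g1: "?g 1 > 0" using KH_phi_num_pos_if_le_1 N d by simp
  have gs: "x \<ge> s \<Longrightarrow> ?g x > 0" for x using KH_phi_num_pos_if_ge_sqrt N d unfolding s_def by blast
  have "z < s" using gs[of z] \<open>?g z < 0\<close> by linarith
  obtain z02 where z02: "1 < z02" "z02 < z" "?g z02 = 0"
    using sign_change_imp_zero[OF cont \<open>z > 1\<close>] g1 \<open>?g z < 0\<close> by (auto simp: mult_pos_neg)
  obtain z03 where z03: "z < z03" "z03 < s" "?g z03 = 0"
    using sign_change_imp_zero[OF cont \<open>z < s\<close>] gs[of s] \<open>?g z < 0\<close> by (auto simp: mult_neg_pos)
  have no_zero: "?g x \<noteq> 0" if "1 \<le> x" "x \<noteq> z02" "x \<noteq> z03" for x
  proof (cases "x = 1")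
    case False
    then show ?thesis
      using KH_phi_num_no_three_zeros[of x z02 z03 N d] KH_phi_num_no_three_zeros[of z02 x z03 N d]
        KH_phi_num_no_three_zeros[of z02 z03 x N d] that z02 z03
      by (cases x z02 rule: linorder_cases; cases x z03 rule: linorder_cases) auto
  qed (use g1 in simp)
  have same_sign: "?g x > 0 \<longleftrightarrow> ?g y > 0"
    if "1 \<le> x" "x \<le> y" "z02 \<notin> {x..y}" "z03 \<notin> {x..y}" for x y
    using pos_iff_pos_if_no_zero[OF cont \<open>x \<le> y\<close>] no_zero that by force
  show thesis
  proof (rule that, unfold_locales)
    show "N > 1" "d > 0" "1 < z02" "?g z02 = 0" "?g z03 = 0" using N d z02 z03 by simp_all
    show "z02 < z03" using z02 z03 by simp
    show "?g x > 0" if "1 < x" "x < z02" for x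
      using same_sign[of 1 x] g1 that z02 z03 by auto
    show "?g x < 0" if "z02 < x" "x < z03" for x
    proof -
      have "\<not> ?g x > 0"
        using same_sign[of x z] same_sign[of z x] \<open>?g z < 0\<close> that z02 z03
        by (cases "x \<le> z") auto
      thus ?thesis using no_zero[of x] that z02 by fastforce
    qed
    show "?g x > 0" if "z03 < x" for x
      using same_sign[of x s] gs[of x] gs[of s] that z02 z03 by (cases "x \<le> s") auto
  qed
qed

section \<open>Monotonicity of \<open>F\<close>\<close>

lemma KH_F_has_real_derivative:
  assumes "N \<noteq> 0" "x^2 \<noteq> 1"
  shows "(KH_F N d has_real_derivative
           -2 * N * (1 - N * x) * KH_phi_num N d x / (x^2 - 1)^2) (at x)"
proof -
  define u where "u = x^2 - 1"
  have "u \<noteq> 0" using assms(2) by (simp add: u_def)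
  have "((\<lambda>x. (1 - N * x)^2) has_real_derivative 2 * (1 - N * x) * (-N)) (at x)"
    by (auto intro!: derivative_eq_intros)
  moreover have "((\<lambda>x. 1 - d^2 / (x^2 - 1)) has_real_derivative d^2 * (2 * x) / u^2) (at x)"
    using assms(2) by (auto intro!: derivative_eq_intros simp: u_def power2_eq_square)
  ultimately have deriv: "(KH_F N d has_real_derivative
      2 * (1 - N * x) * (-N) * (1 - d^2 / u) + d^2 * (2 * x) / u^2 * (1 - N * x)^2) (at x)"
    unfolding KH_F_def u_def by (rule DERIV_mult)
  have "2 * (1 - N * x) * (-N) * (1 - d^2 / u) + d^2 * (2 * x) / u^2 * (1 - N * x)^2
      - (-2 * N * (1 - N * x) * KH_phi_num N d x / u^2)
      = 2 * (1 - N * x) * d^2 / u^2 * (N * u + x * (1 - N * x) + N - x)"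
    using \<open>u \<noteq> 0\<close> assms(1) unfolding KH_phi_num_def u_def[symmetric]
    by (simp add: field_simps power2_eq_square)
  moreover have "N * u + x * (1 - N * x) + N - x = 0"
    unfolding u_def by (simp add: algebra_simps power2_eq_square)
  ultimately have "2 * (1 - N * x) * (-N) * (1 - d^2 / u) + d^2 * (2 * x) / u^2 * (1 - N * x)^2
      = -2 * N * (1 - N * x) * KH_phi_num N d x / u^2"
    by simp
  with deriv show ?thesis unfolding u_def by simp
qed

lemma continuous_on_KH_F:
  assumes "N \<noteq> 0" "\<forall>t\<in>S. t^2 \<noteq> 1"
  shows "continuous_on S (KH_F N d)"
  using assms KH_F_has_real_derivative
  by (intro continuous_at_imp_continuous_on ballI DERIV_isCont) blast

lemma no_pole_above_1: "1 < x \<Longrightarrow> \<forall>t\<in>{x..y}. t^2 \<noteq> (1::real)"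
  by (auto simp: abs_square_eq_1)

lemma no_pole_below_minus_1: "y < -1 \<Longrightarrow> \<forall>t\<in>{x..y}. t^2 \<noteq> (1::real)"
  by (auto simp: abs_square_eq_1)

lemma KH_F_increasing:
  assumes N: "N > 0" and "x < y" and no_pole: "\<forall>t\<in>{x..y}. t^2 \<noteq> 1"
    and sign: "\<And>t. x < t \<Longrightarrow> t < y \<Longrightarrow> (1 - N * t) * KH_phi_num N d t < 0"
  shows "KH_F N d x < KH_F N d y"
proof (rule DERIV_pos_imp_increasing_open[OF \<open>x < y\<close>])
  show "continuous_on {x..y} (KH_F N d)" using continuous_on_KH_F no_pole N by simp
  fix t assume t: "x < t" "t < y"
  have "t^2 \<noteq> 1" using no_pole t by auto
  moreover have "-2 * N * ((1 - N * t) * KH_phi_num N d t) > 0"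
    using sign[OF t] N by (simp add: mult_pos_neg)
  hence "-2 * N * ((1 - N * t) * KH_phi_num N d t) / (t^2 - 1)^2 > 0"
    using \<open>t^2 \<noteq> 1\<close> by (intro divide_pos_pos) simp_all
  ultimately show "\<exists>D. (KH_F N d has_real_derivative D) (at t) \<and> D > 0"
    using KH_F_has_real_derivative[of N t d] N by (auto simp: mult.assoc)
qed

lemma KH_F_decreasing:
  assumes N: "N > 0" and "x < y" and no_pole: "\<forall>t\<in>{x..y}. t^2 \<noteq> 1"
    and sign: "\<And>t. x < t \<Longrightarrow> t < y \<Longrightarrow> (1 - N * t) * KH_phi_num N d t > 0"
  shows "KH_F N d x > KH_F N d y"
proof (rule DERIV_neg_imp_decreasing_open[OF \<open>x < y\<close>])
  show "continuous_on {x..y} (KH_F N d)" using continuous_on_KH_F no_pole N by simp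
  fix t assume t: "x < t" "t < y"
  have "t^2 \<noteq> 1" using no_pole t by auto
  moreover have "-2 * N * ((1 - N * t) * KH_phi_num N d t) < 0"
    using sign[OF t] N by simp
  hence "-2 * N * ((1 - N * t) * KH_phi_num N d t) / (t^2 - 1)^2 < 0"
    using \<open>t^2 \<noteq> 1\<close> by (intro divide_neg_pos) simp_all
  ultimately show "\<exists>D. (KH_F N d has_real_derivative D) (at t) \<and> D < 0"
    using KH_F_has_real_derivative[of N t d] N by (auto simp: mult.assoc)
qed

lemma KH_quartic_eq:
  "KH_quartic N d A = [:-(1 + d^2) - A, 2 * N * (1 + d^2), 1 - N^2 * (1 + d^2) + A, -2 * N, N^2:]"
  by (rule poly_ext)
     (simp add: KH_quartic_def algebra_simps power2_eq_square power3_eq_cube power4_eq_xxxx)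

lemma degree_KH_quartic: "N \<noteq> 0 \<Longrightarrow> degree (KH_quartic N d A) = 4"
  unfolding KH_quartic_eq by simp

lemma KH_quartic_nonzero: "N \<noteq> 0 \<Longrightarrow> KH_quartic N d A \<noteq> 0"
  unfolding KH_quartic_eq by simp

lemma poly_KH_quartic: "poly (KH_quartic N d A) x = (1 - N * x)^2 * (x^2 - 1 - d^2) + A * (x^2 - 1)"
  unfolding KH_quartic_def by (simp add: algebra_simps power2_eq_square)

lemma poly_KH_quartic_eq_KH_F:
  "x^2 \<noteq> 1 \<Longrightarrow> poly (KH_quartic N d A) x = (x^2 - 1) * (KH_F N d x + A)"
  unfolding poly_KH_quartic KH_F_def by (simp add: field_simps)

lemma poly_KH_quartic_eq_0_iff:
  "x^2 \<noteq> 1 \<Longrightarrow> poly (KH_quartic N d A) x = 0 \<longleftrightarrow> KH_F N d x = -A"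
  by (auto simp: poly_KH_quartic_eq_KH_F)

lemma poly_KH_quartic_pos_iff:
  "x^2 > 1 \<Longrightarrow> poly (KH_quartic N d A) x > 0 \<longleftrightarrow> KH_F N d x > -A"
  by (auto simp: poly_KH_quartic_eq_KH_F zero_less_mult_iff)

lemma poly_KH_quartic_neg_iff:
  "x^2 > 1 \<Longrightarrow> poly (KH_quartic N d A) x < 0 \<longleftrightarrow> KH_F N d x < -A"
  by (auto simp: poly_KH_quartic_eq_KH_F mult_less_0_iff)

lemma poly_pderiv_KH_quartic:
  "poly (pderiv (KH_quartic N d A)) x
     = -2 * N * (1 - N * x) * (x^2 - 1 - d^2) + 2 * x * (1 - N * x)^2 + 2 * A * x"
  unfolding KH_quartic_eq
  by (simp add: pderiv_pCons algebra_simps power2_eq_square power3_eq_cube)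

lemma poly_pderiv_KH_quartic_eq:
  assumes "N \<noteq> 0"
  shows "poly (pderiv (KH_quartic N d A)) x * (x^2 - 1)
           = -2 * N * (1 - N * x) * KH_phi_num N d x + 2 * x * poly (KH_quartic N d A) x"
  using assms unfolding poly_pderiv_KH_quartic poly_KH_quartic KH_phi_num_def
  by (simp add: field_simps power2_eq_square)

lemma poly_pderiv_KH_quartic_eq_0_iff:
  assumes "N \<noteq> 0" "x^2 \<noteq> 1" "poly (KH_quartic N d A) x = 0"
  shows "poly (pderiv (KH_quartic N d A)) x = 0 \<longleftrightarrow> (1 - N * x) * KH_phi_num N d x = 0"
  using poly_pderiv_KH_quartic_eq[OF assms(1), of d A x] assms by auto

lemma poly_KH_quartic_at_sqrt: "x^2 = 1 + d^2 \<Longrightarrow> poly (KH_quartic N d A) x = A * d^2"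
  unfolding poly_KH_quartic by simp

lemma poly_KH_quartic_neg:
  assumes "N > 1" "d > 0" "A > 0" "x^2 \<le> 1"
  shows "poly (KH_quartic N d A) x < 0"
proof -
  have "x^2 - 1 - d^2 < 0" using assms(2,4) by (smt (verit) zero_less_power2)
  moreover have "A * (x^2 - 1) \<le> 0" using assms(3,4) by (simp add: mult_nonneg_nonpos)
  moreover have "(1 - N * x)^2 > 0 \<or> x^2 < 1"
  proof (cases "x^2 < 1")
    case False
    hence "x = 1 \<or> x = -1" using assms(4) by (simp add: abs_square_eq_1) linarith
    hence "N * x \<noteq> 1" using assms(1) by auto
    thus ?thesis by simp
  qed simp
  ultimately show ?thesis
    unfolding poly_KH_quartic using assms(3)
    by (smt (verit) mult_pos_neg mult_nonneg_nonpos zero_le_power2 mult_pos_pos)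
qed

lemma KH_quartic_root_sq_gt_1:
  assumes "N > 1" "d > 0" "A > 0" "poly (KH_quartic N d A) x = 0"
  shows "x^2 > 1"
  using poly_KH_quartic_neg[OF assms(1-3), of x] assms(4) by fastforce

section \<open>Real roots of the quartic\<close>

context KH_sign_pattern
begin

lemma z03_less_sqrt: "z03 < sqrt (1 + d^2)"
  using KH_phi_num_pos_if_ge_sqrt[OF N_gt_1 d_pos, of z03] zero_z03 by force

lemma KH_phi_num_eq_0_iff: "1 < x \<Longrightarrow> KH_phi_num N d x = 0 \<longleftrightarrow> x = z02 \<or> x = z03"
  using pos_below_z02[of x] neg_between[of x] pos_above_z03[of x] zero_z02 zero_z03
  by (cases x z02 rule: linorder_cases; cases x z03 rule: linorder_cases) auto

lemma KH_phi_zeros: "{z. 1 < z \<and> z < sqrt (1 + d^2) \<and> KH_phi N d z = 0} = {z02, z03}"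
proof -
  have "KH_phi N d z = 0 \<longleftrightarrow> KH_phi_num N d z = 0" if "1 < z" for z
  proof -
    have "z^2 \<noteq> 1" using that by (simp add: abs_square_eq_1)
    thus ?thesis using KH_phi_eq_num[of z d N] d_pos by simp
  qed
  thus ?thesis using KH_phi_num_eq_0_iff one_less_z02 z02_less_z03 z03_less_sqrt by auto
qed

lemma one_minus_N_mult_neg: "1 < x \<Longrightarrow> 1 - N * x < 0"
  using N_gt_1 less_1_mult[of N x] by simp

lemma one_minus_N_mult_pos: "x < -1 \<Longrightarrow> 1 - N * x > 0"
  using N_gt_1 mult_pos_neg[of N x] by simp

lemma KH_F_strict_mono_on_below_z02: "strict_mono_on {1<..z02} (KH_F N d)"
proof (rule strict_mono_onI)
  fix x y :: real assume "x \<in> {1<..z02}" "y \<in> {1<..z02}" "x < y"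
  then show "KH_F N d x < KH_F N d y"
    using N_gt_1 no_pole_above_1 one_minus_N_mult_neg pos_below_z02
    by (intro KH_F_increasing) (auto intro: mult_neg_pos)
qed

lemma KH_F_strict_antimono_on_between: "strict_antimono_on {z02..z03} (KH_F N d)"
proof (rule monotone_onI)
  fix x y :: real assume "x \<in> {z02..z03}" "y \<in> {z02..z03}" "x < y"
  then show "KH_F N d x > KH_F N d y"
    using N_gt_1 one_less_z02 no_pole_above_1 one_minus_N_mult_neg neg_between
    by (intro KH_F_decreasing) (auto intro: mult_neg_neg)
qed

lemma KH_F_strict_mono_on_above_z03: "strict_mono_on {z03..} (KH_F N d)"
proof (rule strict_mono_onI)
  fix x y :: real assume "x \<in> {z03..}" "y \<in> {z03..}" "x < y"
  then show "KH_F N d x < KH_F N d y"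
    using N_gt_1 one_less_z02 z02_less_z03 no_pole_above_1 one_minus_N_mult_neg pos_above_z03
    by (intro KH_F_increasing) (auto intro: mult_neg_pos)
qed

lemma KH_F_strict_antimono_on_below_minus_1: "strict_antimono_on {..<-1} (KH_F N d)"
proof (rule monotone_onI)
  fix x y :: real assume "x \<in> {..<-1}" "y \<in> {..<-1}" "x < y"
  then show "KH_F N d x > KH_F N d y"
    using N_gt_1 d_pos no_pole_below_minus_1 one_minus_N_mult_pos KH_phi_num_pos_if_le_1
    by (intro KH_F_decreasing) auto
qed

lemma KH_F_le_local_max: "1 < x \<Longrightarrow> x \<le> z03 \<Longrightarrow> KH_F N d x \<le> KH_F N d z02"
  using strict_mono_on_leD[OF KH_F_strict_mono_on_below_z02, of x z02]
    monotone_onD[OF KH_F_strict_antimono_on_between, of z02 x] one_less_z02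
  by (cases x z02 rule: linorder_cases) auto

lemma KH_F_ge_local_min: "z02 \<le> x \<Longrightarrow> KH_F N d z03 \<le> KH_F N d x"
  using strict_mono_on_leD[OF KH_F_strict_mono_on_above_z03, of z03 x]
    monotone_onD[OF KH_F_strict_antimono_on_between, of x z03] z02_less_z03
  by (cases x z03 rule: linorder_cases) auto

context
  fixes A :: real
  assumes A_pos: "A > 0"
begin

abbreviation Q where "Q \<equiv> KH_quartic N d A"

lemma Q_nonzero: "Q \<noteq> 0"
  using KH_quartic_nonzero N_gt_1 by simp

lemma Q_root_abs_gt_1: "poly Q x = 0 \<Longrightarrow> 1 < \<bar>x\<bar>"
  using KH_quartic_root_sq_gt_1[OF N_gt_1 d_pos A_pos] abs_square_le_1[of x] by fastforce

lemma poly_Q_at_1: "poly Q 1 < 0"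
  using poly_KH_quartic_neg[OF N_gt_1 d_pos A_pos] by simp

lemma poly_Q_at_sqrt: "poly Q (sqrt (1 + d^2)) > 0" "poly Q (- sqrt (1 + d^2)) > 0"
  using poly_KH_quartic_at_sqrt[of _ d N A] A_pos d_pos by simp_all

lemma Q_sign_change_imp_root:
  "a < b \<Longrightarrow> poly Q a * poly Q b < 0 \<Longrightarrow> \<exists>x. a < x \<and> x < b \<and> poly Q x = 0"
  by (rule sign_change_imp_zero) (auto intro: continuous_intros)

lemma Q_multiple_root_iff:
  assumes "poly Q x = 0"
  shows "poly (pderiv Q) x = 0 \<longleftrightarrow> x = z02 \<or> x = z03"
proof -
  have "1 < \<bar>x\<bar>" using Q_root_abs_gt_1[OF assms] .
  hence "x^2 \<noteq> 1" by (simp add: abs_square_eq_1)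
  moreover have "1 - N * x \<noteq> 0"
    using \<open>1 < \<bar>x\<bar>\<close> one_minus_N_mult_neg one_minus_N_mult_pos
    by (fastforce simp: abs_if split: if_splits)
  moreover have "x < -1 \<Longrightarrow> KH_phi_num N d x \<noteq> 0"
    using KH_phi_num_pos_if_le_1[OF N_gt_1 d_pos, of x] by simp
  ultimately show ?thesis
    using poly_pderiv_KH_quartic_eq_0_iff[of N x d A] assms N_gt_1 KH_phi_num_eq_0_iff[of x]
      one_less_z02 z02_less_z03 \<open>1 < \<bar>x\<bar>\<close> by (auto simp: abs_if split: if_splits)
qed

lemma Q_unique_root_below_minus_1:
  obtains r0 where "r0 < -1" "\<And>x. x < -1 \<Longrightarrow> poly Q x = 0 \<longleftrightarrow> x = r0"
proof -
  define s where "s = sqrt (1 + d^2)"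
  have "1 < s" using d_pos by (simp add: s_def)
  then obtain r0 where r0: "-s < r0" "r0 < -1" "poly Q r0 = 0"
    using Q_sign_change_imp_root[of "-s" "-1"] poly_Q_at_sqrt(2) poly_KH_quartic_neg[OF N_gt_1 d_pos A_pos, of "-1"]
    unfolding s_def by (auto simp: mult_pos_neg)
  have "x = r0" if "x < -1" "poly Q x = 0" for x
  proof -
    have "x^2 \<noteq> 1" "r0^2 \<noteq> 1" using that r0 by (simp_all add: abs_square_eq_1)
    hence "KH_F N d x = KH_F N d r0"
      using poly_KH_quartic_eq_0_iff that r0 by metis
    moreover have "inj_on (KH_F N d) {..<-1}"
      using KH_F_strict_antimono_on_below_minus_1 strict_antimono_iff_antimono by blast
    ultimately show ?thesis using that r0 by (auto dest: inj_onD)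
  qed
  thus ?thesis using that r0 by blast
qed

lemma Q_four_real_roots:
  assumes "- KH_F N d z02 < A" "A \<le> - KH_F N d z03"
  shows "real_root_count (KH_quartic N d A) = 4"
proof -
  let ?s = "sqrt (1 + d^2)"
  have sq: "z02^2 > 1" "z03^2 > 1"
    using one_less_z02 z02_less_z03 by (simp_all add: one_less_power)
  have Q_z02: "poly Q z02 > 0" using poly_KH_quartic_pos_iff[OF sq(1)] assms(1) by simp
  obtain r0 where r0: "r0 < -1" "poly Q r0 = 0" using Q_unique_root_below_minus_1 by blast
  obtain r1 where r1: "1 < r1" "r1 < z02" "poly Q r1 = 0"
    using Q_sign_change_imp_root[OF one_less_z02] poly_Q_at_1 Q_z02
    by (auto simp: mult_neg_pos)
  have "4 \<le> real_root_count Q"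
  proof (cases "KH_F N d z03 = -A")
    case True
    hence "poly Q z03 = 0" using poly_KH_quartic_eq_0_iff sq(2) by simp
    hence "order z03 Q \<ge> 2"
      using order_ge_2_if_multiple_root Q_multiple_root_iff Q_nonzero by auto
    moreover have "order r0 Q \<ge> 1" "order r1 Q \<ge> 1"
      using r0 r1 order_root Q_nonzero by (auto simp: Suc_le_eq)
    moreover have "(\<Sum>x\<in>{r0, r1, z03}. order x Q) \<le> real_root_count Q"
      using r0 r1 \<open>poly Q z03 = 0\<close> by (intro sum_order_le_real_root_count Q_nonzero) auto
    ultimately show ?thesis using r0 r1 one_less_z02 z02_less_z03 by simp
  next
    case False
    hence "KH_F N d z03 < -A" using assms(2) by simp
    hence Q_z03: "poly Q z03 < 0" using poly_KH_quartic_neg_iff sq(2) by simp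
    obtain r2 where r2: "z02 < r2" "r2 < z03" "poly Q r2 = 0"
      using Q_sign_change_imp_root[OF z02_less_z03] Q_z02 Q_z03 by (auto simp: mult_pos_neg)
    obtain r3 where r3: "z03 < r3" "r3 < ?s" "poly Q r3 = 0"
      using Q_sign_change_imp_root[OF z03_less_sqrt] Q_z03 poly_Q_at_sqrt(1) by (auto simp: mult_neg_pos)
    have "card {r0, r1, r2, r3} \<le> real_root_count Q"
      using r0 r1 r2 r3 by (intro card_le_real_root_count Q_nonzero) auto
    thus ?thesis using r0 r1 r2 r3 one_less_z02 by simp
  qed
  moreover have "real_root_count Q \<le> 4"
    using real_root_count_le_degree[OF Q_nonzero] degree_KH_quartic N_gt_1 by simp
  ultimately show ?thesis by simp
qed

lemma Q_unique_root_above_1: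
  assumes "A < - KH_F N d z02 \<or> A > - KH_F N d z03"
  obtains r where "1 < r" "r \<noteq> z02" "r \<noteq> z03" "\<And>x. 1 < x \<Longrightarrow> poly Q x = 0 \<longleftrightarrow> x = r"
proof -
  have sq: "x^2 > 1" if "1 < x" for x :: real using that by (simp add: one_less_power)
  have root_iff: "poly Q x = 0 \<longleftrightarrow> KH_F N d x = -A" if "1 < x" for x
    using poly_KH_quartic_eq_0_iff sq[OF that] by simp
  show thesis
  proof (cases "A < - KH_F N d z02")
    case True
    have no_root: "KH_F N d x < -A" if "1 < x" "x \<le> z03" for x
      using KH_F_le_local_max[OF that] True by simp
    have "1 < z03" using one_less_z02 z02_less_z03 by simp
    hence "poly Q z03 < 0" using no_root[of z03] poly_KH_quartic_neg_iff sq by simp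
    then obtain r where r: "z03 < r" "poly Q r = 0"
      using Q_sign_change_imp_root[OF z03_less_sqrt] poly_Q_at_sqrt(1) by (auto simp: mult_neg_pos)
    have uniq: "x = r" if "1 < x" "poly Q x = 0" for x
    proof -
      have "z03 < x"
      proof (rule ccontr)
        assume "\<not> z03 < x"
        thus False using no_root[of x] root_iff[of x] that by simp
      qed
      moreover have "KH_F N d x = KH_F N d r" using root_iff that r \<open>1 < z03\<close> by simp
      ultimately show ?thesis
        using strict_mono_on_eqD[OF KH_F_strict_mono_on_above_z03, of x r] r by simp
    qed
    moreover have "1 < r" "r \<noteq> z02" "r \<noteq> z03" using r \<open>1 < z03\<close> z02_less_z03 by auto
    ultimately show thesis using that r(2) by blast
  next
    case False
    hence no_root: "KH_F N d x > -A" if "z02 \<le> x" for x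
      using KH_F_ge_local_min[OF that] assms by simp
    hence "poly Q z02 > 0" using poly_KH_quartic_pos_iff sq one_less_z02 by simp
    then obtain r where r: "1 < r" "r < z02" "poly Q r = 0"
      using Q_sign_change_imp_root[OF one_less_z02] poly_Q_at_1 by (auto simp: mult_neg_pos)
    have uniq: "x = r" if "1 < x" "poly Q x = 0" for x
    proof -
      have "x < z02"
      proof (rule ccontr)
        assume "\<not> x < z02"
        thus False using no_root[of x] root_iff[of x] that by simp
      qed
      moreover have "KH_F N d x = KH_F N d r" using root_iff that r by simp
      ultimately show ?thesis
        using strict_mono_on_eqD[OF KH_F_strict_mono_on_below_z02, of x r] r that by simp
    qed
    moreover have "r \<noteq> z02" "r \<noteq> z03" using r z02_less_z03 by auto
    ultimately show thesis using that r(1,3) by blast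
  qed
qed

lemma Q_two_real_roots:
  assumes "A < - KH_F N d z02 \<or> A > - KH_F N d z03"
  shows "real_root_count (KH_quartic N d A) = 2"
proof -
  obtain r0 where r0: "r0 < -1" "\<And>x. x < -1 \<Longrightarrow> poly Q x = 0 \<longleftrightarrow> x = r0"
    using Q_unique_root_below_minus_1 by blast
  obtain r where r: "1 < r" "r \<noteq> z02" "r \<noteq> z03" "\<And>x. 1 < x \<Longrightarrow> poly Q x = 0 \<longleftrightarrow> x = r"
    using Q_unique_root_above_1[OF assms] by blast
  have roots: "{x. poly Q x = 0} = {r0, r}"
  proof (intro set_eqI iffI)
    fix x assume "x \<in> {x. poly Q x = 0}"
    hence "poly Q x = 0" by simp
    moreover from this have "x < -1 \<or> 1 < x"
      using Q_root_abs_gt_1[of x] by (simp add: abs_if split: if_splits)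
    ultimately show "x \<in> {r0, r}" using r0 r by auto
  qed (use r0 r in auto)
  have "poly (pderiv Q) x \<noteq> 0" if "poly Q x = 0" for x
  proof -
    have "x = r0 \<or> x = r" using that roots by blast
    thus ?thesis using Q_multiple_root_iff[OF that] r(1-3) r0(1) one_less_z02 z02_less_z03 by auto
  qed
  hence "real_root_count Q = card {r0, r}"
    unfolding roots[symmetric] by (intro real_root_count_eq_card_if_simple_roots Q_nonzero)
  thus ?thesis using r0 r(1) by simp
qed

end

end

theorem proposition3:
  fixes N d :: real
  assumes "N > 1" and "d > 0"
    and "d^2 > 16 * N^2 / 27 * ((8 * N^2 - 6) * sqrt (1 - 3 / (4 * N^2)) + 8 * N^2 - 9)"
  shows "\<exists>z02 z03. z02 < z03 \<and>
           {z. 1 < z \<and> z < sqrt (1 + d^2) \<and> KH_phi N d z = 0} = {z02, z03} \<and>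
           (\<forall>A::real. A > 0 \<longrightarrow>
              ((- KH_F N d z02 < A \<and> A \<le> - KH_F N d z03) \<longrightarrow>
                  real_root_count (KH_quartic N d A) = 4) \<and>
              ((A < - KH_F N d z02 \<or> A > - KH_F N d z03) \<longrightarrow>
                  real_root_count (KH_quartic N d A) = 2 \<and>
                  nonreal_root_count (KH_quartic N d A) = 2))"
proof -
  obtain z02 z03 where "KH_sign_pattern N d z02 z03" using KH_phi_num_zeros[OF assms] .
  then interpret KH_sign_pattern N d z02 z03 .
  show ?thesis
  proof (intro exI conjI allI impI)
    show "z02 < z03" by (rule z02_less_z03)
    show "{z. 1 < z \<and> z < sqrt (1 + d^2) \<and> KH_phi N d z = 0} = {z02, z03}" by (rule KH_phi_zeros)
    fix A :: real assume "A > 0"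
    show "real_root_count (KH_quartic N d A) = 4" if "- KH_F N d z02 < A \<and> A \<le> - KH_F N d z03"
      using Q_four_real_roots[OF \<open>A > 0\<close>] that by blast
    assume two: "A < - KH_F N d z02 \<or> A > - KH_F N d z03"
    show real2: "real_root_count (KH_quartic N d A) = 2"
      using Q_two_real_roots[OF \<open>A > 0\<close> two] .
    have "real_root_count (KH_quartic N d A) + nonreal_root_count (KH_quartic N d A) = 4"
      using real_root_count_add_nonreal_root_count[OF KH_quartic_nonzero] degree_KH_quartic N_gt_1
      by simp
    thus "nonreal_root_count (KH_quartic N d A) = 2" using real2 by simp
  qed
qed

end
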